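(* Let $m>0$, $n\in\mathbb{R}$, and let $b:\mathbb{R}\to\mathbb{R}$ be periodic with period $m$ and Riemann-integrable on every bounded interval. If $u\in\mathbb{R}$ satisfies $\int_u^{u+m}b(x)\,dx\le n$, then there exists $x_1\in[u,u+m]$ such that for all $x_2\in[x_1,x_1+m]$, $$\int_{x_1}^{x_2}b(x)\,dx\le (x_2-x_1)\cdot\frac{n}{m}.$$ *)

theory Defs
  imports "HOL-Analysis.Analysis"
begin

text \<open>Riemann integrability on a compact interval [a,b]: Riemann sums over tagged
  divisions whose pieces lie within uniform distance delta of their tags converge
  (i.e. the integral exists with respect to constant gauges).\<close>
definition riemann_integrable_on :: "(real \<Rightarrow> real) \<Rightarrow> real \<Rightarrow> real \<Rightarrow> bool" where
  "riemann_integrable_on f a b \<longleftrightarrow>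
     (\<exists>I. \<forall>e>0. \<exists>d>0. \<forall>p. p tagged_division_of {a..b} \<and> (\<lambda>x. ball x d) fine p \<longrightarrow>
        \<bar>(\<Sum>(x,K)\<in>p. Henstock_Kurzweil_Integration.content K * f x) - I\<bar> < e)"

end

theory Submission
  imports Defs
begin

text \<open>Let \<open>G x = \<integral>\<^sub>u\<^sup>x b - (n/m)(x - u)\<close>. Periodicity of \<open>b\<close> and \<open>\<integral>\<^sub>u\<^sup>u\<^sup>+\<^sup>m b \<le> n\<close> give
  \<open>G (y + m) \<le> G y\<close>, so a maximiser \<open>x\<^sub>1\<close> of \<open>G\<close> on \<open>[u, u+m]\<close> also dominates \<open>G\<close> on
  \<open>[u+m, u+2m]\<close>; in particular \<open>G x\<^sub>2 \<le> G x\<^sub>1\<close> for \<open>x\<^sub>2 \<in> [x\<^sub>1, x\<^sub>1+m]\<close>, which is the claim.\<close>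

lemma riemann_integrable_on_imp_integrable_on:
  assumes "riemann_integrable_on f s t"
  shows "f integrable_on {s..t}"
proof -
  obtain I where I: "\<forall>e>0. \<exists>d>0. \<forall>p. p tagged_division_of {s..t} \<and> (\<lambda>x. ball x d) fine p \<longrightarrow>
        \<bar>(\<Sum>(x,K)\<in>p. Henstock_Kurzweil_Integration.content K * f x) - I\<bar> < e"
    using assms unfolding riemann_integrable_on_def by blast
  have "(f has_integral I) {s..t}"
    unfolding has_integral_real
  proof (intro allI impI)
    fix e :: real
    assume "e > 0"
    with I obtain d where "d > 0" and "\<forall>p. p tagged_division_of {s..t} \<and> (\<lambda>x. ball x d) fine p \<longrightarrow>
        \<bar>(\<Sum>(x,K)\<in>p. Henstock_Kurzweil_Integration.content K * f x) - I\<bar> < e"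
      by blast
    then show "\<exists>\<gamma>. gauge \<gamma> \<and> (\<forall>\<D>. \<D> tagged_division_of {s..t} \<and> \<gamma> fine \<D> \<longrightarrow>
        norm (sum (\<lambda>(x,k). Henstock_Kurzweil_Integration.content k *\<^sub>R f x) \<D> - I) < e)"
      by (intro exI[of _ "\<lambda>x. ball x d"]) (auto simp: gauge_def)
  qed
  then show ?thesis
    by blast
qed

lemma integral_Icc_periodic_shift:
  fixes b :: "real \<Rightarrow> real"
  assumes "\<And>x. b (x + m) = b x"
  shows "integral {s+m..t+m} b = integral {s..t} b"
proof -
  have "b \<circ> (+) m = b"
    using assms by (auto simp: fun_eq_iff add.commute)
  then show ?thesis
    using integral_shift_Icc_real[of s t b m] by simp
qed

lemma continuous_max_dominates_next_period:
  fixes G :: "real \<Rightarrow> real"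
  assumes "m > 0" and "continuous_on {u..u+m} G"
    and "\<And>y. y \<in> {u..u+m} \<Longrightarrow> G (y + m) \<le> G y"
  shows "\<exists>x1\<in>{u..u+m}. \<forall>x2\<in>{x1..x1+m}. G x2 \<le> G x1"
proof -
  obtain x1 where x1: "x1 \<in> {u..u+m}" and max: "\<And>y. y \<in> {u..u+m} \<Longrightarrow> G y \<le> G x1"
    using continuous_attains_sup[of "{u..u+m}" G] assms(1,2) by auto
  have "G x2 \<le> G x1" if x2: "x2 \<in> {x1..x1+m}" for x2
  proof (cases "x2 \<le> u + m")
    case True
    then show ?thesis
      using max x1 x2 by auto
  next
    case False
    then have "x2 - m \<in> {u..u+m}"
      using x1 x2 by auto
    then have "G x2 \<le> G (x2 - m)"
      using assms(3)[of "x2 - m"] by simp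
    also have "\<dots> \<le> G x1"
      using max \<open>x2 - m \<in> {u..u+m}\<close> by blast
    finally show ?thesis .
  qed
  with x1 show ?thesis
    by blast
qed

theorem mainTheorem14:
  fixes b :: "real \<Rightarrow> real" and m n u :: real
  assumes "m > 0"
    and "\<And>x. b (x + m) = b x"
    and "\<And>s t. s \<le> t \<Longrightarrow> riemann_integrable_on b s t"
    and "integral {u..u+m} b \<le> n"
  shows "\<exists>x1\<in>{u..u+m}. \<forall>x2\<in>{x1..x1+m}. integral {x1..x2} b \<le> (x2 - x1) * (n / m)"
proof -
  have int: "b integrable_on {s..t}" if "s \<le> t" for s t
    using riemann_integrable_on_imp_integrable_on assms(3) that by blast
  have combine: "integral {s..t} b + integral {t..r} b = integral {s..r} b"
    if "s \<le> t" "t \<le> r" for s t r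
    using Henstock_Kurzweil_Integration.integral_combine[of s t r b] int[of s r] that by simp
  define G where "G x = integral {u..x} b - (x - u) * (n / m)" for x
  have "continuous_on {u..u+m} (\<lambda>x. integral {u..x} b)"
    using assms(1) int by (intro indefinite_integral_continuous_1) auto
  then have "continuous_on {u..u+m} G"
    unfolding G_def by (intro continuous_intros)
  moreover have "G (y + m) \<le> G y" if "y \<in> {u..u+m}" for y
  proof -
    have "integral {u..y+m} b = integral {u..u+m} b + integral {u..y} b"
      using combine[of u "u+m" "y+m"] integral_Icc_periodic_shift[of b m u y, OF assms(2)] that by simp
    then show ?thesis
      using assms(1,4) by (simp add: G_def field_simps)
  qed
  ultimately obtain x1 where x1: "x1 \<in> {u..u+m}" and dom: "\<forall>x2\<in>{x1..x1+m}. G x2 \<le> G x1"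
    using continuous_max_dominates_next_period[OF assms(1)] by blast
  have "integral {x1..x2} b \<le> (x2 - x1) * (n / m)" if "x2 \<in> {x1..x1+m}" for x2
  proof -
    have "integral {x1..x2} b = integral {u..x2} b - integral {u..x1} b"
      using combine[of u x1 x2] x1 that by simp
    moreover have "G x2 \<le> G x1"
      using dom that by blast
    moreover have "(x2 - x1) * (n / m) = (x2 - u) * (n / m) - (x1 - u) * (n / m)"
      by algebra
    ultimately show ?thesis
      unfolding G_def by linarith
  qed
  with x1 show ?thesis
    by blast
qed

end
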